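(* Let $X$ be a nonzero real Banach space, $m\ge1$, $f_0\colon X\to\,]{-}\infty,\infty]$ proper, convex and lower semicontinuous, and $f_1,\dots,f_m$ real-valued convex continuous functions on $X$. Suppose there exists $x^{**}\in X^{**}$ such that $f_i^{**}(x^{**})\le0$ for all $i=0,\dots,m$. Then for every $\varepsilon>0$ there exists $x\in X$ such that $f_i(x)\le\varepsilon$ for all $i=0,\dots,m$.
   Context: $f^*(x^* )=\sup_{x\in X}[\langle x,x^*\rangle-f(x)]$ on $X^*$ and $f^{**}(x^{**})=\sup_{x^*\in X^*}[\langle x^*,x^{**}\rangle-f^*(x^* )]$ on the bidual $X^{**}$. *)

theory Defs
  imports "HOL-Analysis.Analysis"
begin

text \<open>Dual space: X* = X \<Rightarrow>L real (bounded linear functionals); bidual X** = X* \<Rightarrow>L real.\<close>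

definition proper_fun :: "('a \<Rightarrow> ereal) \<Rightarrow> bool" where
  "proper_fun f \<longleftrightarrow> (\<forall>x. f x \<noteq> -\<infinity>) \<and> (\<exists>x. f x \<noteq> \<infinity>)"

definition convex_ext :: "('a::real_vector \<Rightarrow> ereal) \<Rightarrow> bool" where
  "convex_ext f \<longleftrightarrow> convex {(x, r::real). f x \<le> ereal r}"

definition lsc_ext :: "('a::topological_space \<Rightarrow> ereal) \<Rightarrow> bool" where
  "lsc_ext f \<longleftrightarrow> (\<forall>c. closed {x. f x \<le> c})"

definition conj :: "('a::real_normed_vector \<Rightarrow> ereal) \<Rightarrow> ('a \<Rightarrow>\<^sub>L real) \<Rightarrow> ereal" where
  "conj f xs = (SUP x. ereal (blinfun_apply xs x) - f x)"

definition biconj :: "('a::real_normed_vector \<Rightarrow> ereal) \<Rightarrow> (('a \<Rightarrow>\<^sub>L real) \<Rightarrow>\<^sub>L real) \<Rightarrow> ereal" where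
  "biconj f xss = (SUP xs. ereal (blinfun_apply xss xs) - conj f xs)"

end

theory Submission
  imports Defs "HOL-Library.Function_Algebras"
begin

text \<open>
  Suppose no \<open>x\<close> satisfies \<open>f\<^sub>i x < \<epsilon>\<close> for all \<open>i = 0, \<dots>, m\<close>. Separating the point
  \<open>(\<epsilon>, \<dots>, \<epsilon>)\<close> from the convex set \<open>{t. \<exists>x. \<forall>i. f\<^sub>i x < t\<^sub>i}\<close> yields multipliers
  \<open>\<mu>\<^sub>i \<ge> 0\<close>, not all zero, with \<open>\<Sum>\<^sub>i \<mu>\<^sub>i f\<^sub>i \<ge> \<epsilon> \<Sum>\<^sub>i \<mu>\<^sub>i\<close>. The Fenchel sum rule splits this
  inequality into continuous functionals \<open>y\<^sub>i\<close> with \<open>\<Sum>\<^sub>i y\<^sub>i = 0\<close> and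
  \<open>\<Sum>\<^sub>i sup\<^sub>x (y\<^sub>i x - \<mu>\<^sub>i f\<^sub>i x) < 0\<close>. Since \<open>f\<^sub>i** x** \<le> 0\<close>, each \<open>x** y\<^sub>i\<close> is bounded by the
  \<open>i\<close>-th supremum (for \<open>\<mu>\<^sub>0 = 0\<close> with the help of an affine minorant of \<open>f\<^sub>0\<close>), so
  \<open>0 = x** (\<Sum>\<^sub>i y\<^sub>i) < 0\<close>.
\<close>

section \<open>The Hahn--Banach theorem\<close>

definition sublinear :: "('v::real_vector \<Rightarrow> real) \<Rightarrow> bool" where
  "sublinear p \<longleftrightarrow> (\<forall>x y. p (x + y) \<le> p x + p y) \<and> (\<forall>c x. c > 0 \<longrightarrow> p (c *\<^sub>R x) = c * p x)"

lemma sublinear_add_le: "sublinear p \<Longrightarrow> p (x + y) \<le> p x + p y"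
  unfolding sublinear_def by blast

lemma sublinear_scaleR: "sublinear p \<Longrightarrow> c > 0 \<Longrightarrow> p (c *\<^sub>R x) = c * p x"
  unfolding sublinear_def by blast

lemma sublinear_zero: "sublinear p \<Longrightarrow> p 0 = 0"
  using sublinear_scaleR[of p 2 0] by simp

lemma sublinear_minus_le: "sublinear p \<Longrightarrow> - p (- x) \<le> p x"
  using sublinear_add_le[of p x "- x"] sublinear_zero[of p] by simp

text \<open>Partial extensions in the Hahn--Banach argument are handled through their graphs, so that
  Zorn's lemma applies to sets ordered by inclusion.\<close>

definition dominated_linear_graph :: "('v::real_vector \<Rightarrow> real) \<Rightarrow> 'v \<Rightarrow> ('v \<times> real) set \<Rightarrow> bool" where
  "dominated_linear_graph p x0 G \<longleftrightarrow> (x0, p x0) \<in> G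
     \<and> (\<forall>x a b. (x, a) \<in> G \<longrightarrow> (x, b) \<in> G \<longrightarrow> a = b)
     \<and> (\<forall>x a y b. (x, a) \<in> G \<longrightarrow> (y, b) \<in> G \<longrightarrow> (x + y, a + b) \<in> G)
     \<and> (\<forall>x a c. (x, a) \<in> G \<longrightarrow> (c *\<^sub>R x, c * a) \<in> G)
     \<and> (\<forall>x a. (x, a) \<in> G \<longrightarrow> a \<le> p x)"

lemma dominated_linear_graph_line:
  assumes p: "sublinear p"
  shows "dominated_linear_graph p x0 (range (\<lambda>t. (t *\<^sub>R x0, t * p x0)))"
proof -
  have single_valued: "a = b" if "(x, a) = (t *\<^sub>R x0, t * p x0)" "(x, b) = (s *\<^sub>R x0, s * p x0)"
    for x a b s t
  proof (cases "x0 = 0")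
    case True
    then show ?thesis using that sublinear_zero[OF p] by simp
  next
    case False
    then have "t = s" using that by (metis Pair_inject scaleR_cancel_right)
    then show ?thesis using that by simp
  qed
  have dominated: "t * p x0 \<le> p (t *\<^sub>R x0)" for t
  proof -
    consider "t > 0" | "t = 0" | "t < 0" by linarith
    then show ?thesis
    proof cases
      case 3
      have "t * p x0 \<le> (- t) * p (- x0)"
        using mult_left_mono_neg[OF sublinear_minus_le[OF p, of x0], of t] 3 by simp
      also have "\<dots> = p (t *\<^sub>R x0)" using sublinear_scaleR[OF p, of "- t" "- x0"] 3 by simp
      finally show ?thesis .
    qed (use sublinear_scaleR[OF p] sublinear_zero[OF p] in auto)
  qed
  show ?thesis
    unfolding dominated_linear_graph_def
  proof (intro conjI allI impI)
    show "(x0, p x0) \<in> range (\<lambda>t. (t *\<^sub>R x0, t * p x0))"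
      by (rule range_eqI[of _ _ 1]) simp
  next
    fix x a y b
    assume "(x, a) \<in> range (\<lambda>t. (t *\<^sub>R x0, t * p x0))" "(y, b) \<in> range (\<lambda>t. (t *\<^sub>R x0, t * p x0))"
    then obtain t s where "(x, a) = (t *\<^sub>R x0, t * p x0)" "(y, b) = (s *\<^sub>R x0, s * p x0)" by blast
    then show "(x + y, a + b) \<in> range (\<lambda>t. (t *\<^sub>R x0, t * p x0))"
      by (auto intro!: range_eqI[of _ _ "t + s"] simp: algebra_simps)
  next
    fix x a c assume "(x, a) \<in> range (\<lambda>t. (t *\<^sub>R x0, t * p x0))"
    then obtain t where "(x, a) = (t *\<^sub>R x0, t * p x0)" by blast
    then show "(c *\<^sub>R x, c * a) \<in> range (\<lambda>t. (t *\<^sub>R x0, t * p x0))"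
      by (auto intro!: range_eqI[of _ _ "c * t"])
  qed (use single_valued dominated in blast)+
qed

lemma dominated_linear_graph_Union:
  assumes C: "C \<in> chains {G. dominated_linear_graph p x0 G}" and "C \<noteq> {}"
  shows "dominated_linear_graph p x0 (\<Union>C)"
proof -
  have graphs: "dominated_linear_graph p x0 G" if "G \<in> C" for G
    using C chainsD2 that by blast
  have common: "\<exists>G\<in>C. (x, a) \<in> G \<and> (y, b) \<in> G"
    if xa: "(x, a) \<in> \<Union>C" and yb: "(y, b) \<in> \<Union>C" for x a y b
  proof -
    obtain G1 G2 where "G1 \<in> C" "G2 \<in> C" "(x, a) \<in> G1" "(y, b) \<in> G2" using xa yb by blast
    moreover have "G1 \<subseteq> G2 \<or> G2 \<subseteq> G1" using chainsD[OF C \<open>G1 \<in> C\<close> \<open>G2 \<in> C\<close>] .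
    ultimately show ?thesis by blast
  qed
  obtain G0 where "G0 \<in> C" using \<open>C \<noteq> {}\<close> by auto
  show ?thesis
    unfolding dominated_linear_graph_def
  proof (intro conjI allI impI)
    show "(x0, p x0) \<in> \<Union>C" using graphs[OF \<open>G0 \<in> C\<close>] \<open>G0 \<in> C\<close>
      unfolding dominated_linear_graph_def by blast
  next
    fix x a b assume "(x, a) \<in> \<Union>C" "(x, b) \<in> \<Union>C"
    then obtain G where "G \<in> C" "(x, a) \<in> G" "(x, b) \<in> G" using common by blast
    then show "a = b" using graphs unfolding dominated_linear_graph_def by blast
  next
    fix x a y b assume "(x, a) \<in> \<Union>C" "(y, b) \<in> \<Union>C"
    then obtain G where "G \<in> C" "(x, a) \<in> G" "(y, b) \<in> G" using common by blast
    then show "(x + y, a + b) \<in> \<Union>C" using graphs unfolding dominated_linear_graph_def by blast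
  next
    fix x a c assume "(x, a) \<in> \<Union>C"
    then obtain G where "G \<in> C" "(x, a) \<in> G" by blast
    then show "(c *\<^sub>R x, c * a) \<in> \<Union>C" using graphs unfolding dominated_linear_graph_def by blast
  next
    fix x a assume "(x, a) \<in> \<Union>C"
    then obtain G where "G \<in> C" "(x, a) \<in> G" by blast
    then show "a \<le> p x" using graphs unfolding dominated_linear_graph_def by blast
  qed
qed

lemma dominated_linear_graph_extension_value:
  assumes p: "sublinear p" and G: "dominated_linear_graph p x0 G"
  obtains c where "\<And>x a. (x, a) \<in> G \<Longrightarrow> a - p (x - y) \<le> c"
    and "\<And>z b. (z, b) \<in> G \<Longrightarrow> c \<le> p (z + y) - b"
proof -
  define S where "S = {a - p (x - y) | x a. (x, a) \<in> G}"
  have below: "s \<le> p (z + y) - b" if "s \<in> S" "(z, b) \<in> G" for s z b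
  proof -
    obtain x a where s: "s = a - p (x - y)" "(x, a) \<in> G" using \<open>s \<in> S\<close> unfolding S_def by blast
    have "a + b \<le> p ((x - y) + (z + y))"
      using G s(2) that(2) unfolding dominated_linear_graph_def by (simp add: algebra_simps)
    then show ?thesis using sublinear_add_le[OF p, of "x - y" "z + y"] s(1) by linarith
  qed
  have x0: "(x0, p x0) \<in> G" using G unfolding dominated_linear_graph_def by blast
  then have "S \<noteq> {}" unfolding S_def by blast
  have "bdd_above S" by (rule bdd_aboveI) (rule below[OF _ x0])
  show ?thesis
  proof (rule that[of "Sup S"])
    show "a - p (x - y) \<le> Sup S" if "(x, a) \<in> G" for x a
      using that \<open>bdd_above S\<close> by (auto simp: S_def intro!: cSup_upper)
    show "Sup S \<le> p (z + y) - b" if "(z, b) \<in> G" for z b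
      using \<open>S \<noteq> {}\<close> below that by (auto intro!: cSup_least)
  qed
qed

lemma dominated_linear_graph_extension_le:
  assumes p: "sublinear p" and G: "dominated_linear_graph p x0 G"
    and lower: "\<And>x a. (x, a) \<in> G \<Longrightarrow> a - p (x - y) \<le> c"
    and upper: "\<And>z b. (z, b) \<in> G \<Longrightarrow> c \<le> p (z + y) - b"
    and xa: "(x, a) \<in> G"
  shows "a + t * c \<le> p (x + t *\<^sub>R y)"
proof -
  have scaled: "((1 / s) *\<^sub>R x, (1 / s) * a) \<in> G" for s
    using G xa unfolding dominated_linear_graph_def by blast
  consider "t > 0" | "t = 0" | "t < 0" by linarith
  then show ?thesis
  proof cases
    case 1
    have "t * c \<le> t * (p ((1 / t) *\<^sub>R x + y) - (1 / t) * a)"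
      using upper[OF scaled] 1 by (simp add: mult_left_mono)
    also have "\<dots> = p (t *\<^sub>R ((1 / t) *\<^sub>R x + y)) - a"
      using sublinear_scaleR[OF p 1] 1 by (simp add: right_diff_distrib)
    finally show ?thesis using 1 by (simp add: scaleR_add_right)
  next
    case 2
    then show ?thesis using G xa unfolding dominated_linear_graph_def by simp
  next
    case 3
    have "(- t) * ((1 / - t) * a - p ((1 / - t) *\<^sub>R x - y)) \<le> (- t) * c"
      using lower[OF scaled, of "- t"] 3 by (intro mult_left_mono) auto
    also have "(- t) * ((1 / - t) * a - p ((1 / - t) *\<^sub>R x - y)) = a - p ((- t) *\<^sub>R ((1 / - t) *\<^sub>R x - y))"
      using sublinear_scaleR[of p "- t"] p 3 by (simp add: right_diff_distrib)
    finally show ?thesis using 3 by (simp add: scaleR_diff_right)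
  qed
qed

lemma dominated_linear_graph_coefficient_unique:
  assumes G: "dominated_linear_graph p x0 G" and y: "y \<notin> fst ` G"
    and eq: "x1 + t1 *\<^sub>R y = x2 + t2 *\<^sub>R y" and "(x1, a1) \<in> G" "(x2, a2) \<in> G"
  shows "x1 = x2 \<and> t1 = t2"
proof (cases "t1 = t2")
  case False
  let ?d = "1 / (t1 - t2)"
  have add: "\<And>x a y b. (x, a) \<in> G \<Longrightarrow> (y, b) \<in> G \<Longrightarrow> (x + y, a + b) \<in> G"
    and scale: "\<And>x a c. (x, a) \<in> G \<Longrightarrow> (c *\<^sub>R x, c * a) \<in> G"
    using G unfolding dominated_linear_graph_def by blast+
  have "(?d *\<^sub>R x2 + (- ?d) *\<^sub>R x1, ?d * a2 + (- ?d) * a1) \<in> G"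
    using add[OF scale scale, OF \<open>(x2, a2) \<in> G\<close> \<open>(x1, a1) \<in> G\<close>] .
  moreover have "x2 - x1 = (t1 - t2) *\<^sub>R y" using eq by (simp add: algebra_simps)
  then have "?d *\<^sub>R x2 + (- ?d) *\<^sub>R x1 = y" using False by (simp flip: scaleR_diff_right)
  ultimately show ?thesis using y by force
qed (use eq in simp)

definition graph_adjoin :: "('v::real_vector \<times> real) set \<Rightarrow> 'v \<Rightarrow> real \<Rightarrow> ('v \<times> real) set" where
  "graph_adjoin G y c = {(x + t *\<^sub>R y, a + t * c) | x a t. (x, a) \<in> G}"

lemma dominated_linear_graph_adjoin:
  assumes p: "sublinear p" and G: "dominated_linear_graph p x0 G" and y: "y \<notin> fst ` G"
    and lower: "\<And>x a. (x, a) \<in> G \<Longrightarrow> a - p (x - y) \<le> c"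
    and upper: "\<And>z b. (z, b) \<in> G \<Longrightarrow> c \<le> p (z + y) - b"
  shows "dominated_linear_graph p x0 (graph_adjoin G y c)"
proof -
  have single_valued: "\<And>x a b. (x, a) \<in> G \<Longrightarrow> (x, b) \<in> G \<Longrightarrow> a = b"
    and add: "\<And>x a y b. (x, a) \<in> G \<Longrightarrow> (y, b) \<in> G \<Longrightarrow> (x + y, a + b) \<in> G"
    and scale: "\<And>x a c. (x, a) \<in> G \<Longrightarrow> (c *\<^sub>R x, c * a) \<in> G"
    and x0: "(x0, p x0) \<in> G"
    using G unfolding dominated_linear_graph_def by blast+
  show ?thesis
    unfolding dominated_linear_graph_def
  proof (intro conjI allI impI)
    show "(x0, p x0) \<in> graph_adjoin G y c" unfolding graph_adjoin_def using x0 by force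
  next
    fix x a b assume "(x, a) \<in> graph_adjoin G y c" "(x, b) \<in> graph_adjoin G y c"
    then obtain x1 a1 t1 x2 a2 t2 where "x = x1 + t1 *\<^sub>R y" "a = a1 + t1 * c" "(x1, a1) \<in> G"
      "x = x2 + t2 *\<^sub>R y" "b = a2 + t2 * c" "(x2, a2) \<in> G" unfolding graph_adjoin_def by blast
    moreover from this have "x1 = x2" "t1 = t2"
      using dominated_linear_graph_coefficient_unique[OF G y] by metis+
    ultimately show "a = b" using single_valued by blast
  next
    fix x a z b assume "(x, a) \<in> graph_adjoin G y c" "(z, b) \<in> graph_adjoin G y c"
    then obtain x1 a1 t1 x2 a2 t2 where "x = x1 + t1 *\<^sub>R y" "a = a1 + t1 * c" "(x1, a1) \<in> G"
      "z = x2 + t2 *\<^sub>R y" "b = a2 + t2 * c" "(x2, a2) \<in> G" unfolding graph_adjoin_def by blast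
    then have "(x + z, a + b) = ((x1 + x2) + (t1 + t2) *\<^sub>R y, (a1 + a2) + (t1 + t2) * c)"
      by (simp add: algebra_simps)
    then show "(x + z, a + b) \<in> graph_adjoin G y c"
      unfolding graph_adjoin_def using add \<open>(x1, a1) \<in> G\<close> \<open>(x2, a2) \<in> G\<close> by blast
  next
    fix x a d assume "(x, a) \<in> graph_adjoin G y c"
    then obtain x1 a1 t where "x = x1 + t *\<^sub>R y" "a = a1 + t * c" "(x1, a1) \<in> G"
      unfolding graph_adjoin_def by blast
    then have "(d *\<^sub>R x, d * a) = (d *\<^sub>R x1 + (d * t) *\<^sub>R y, d * a1 + (d * t) * c)"
      by (simp add: algebra_simps)
    then show "(d *\<^sub>R x, d * a) \<in> graph_adjoin G y c"
      unfolding graph_adjoin_def using scale \<open>(x1, a1) \<in> G\<close> by blast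
  next
    fix x a assume "(x, a) \<in> graph_adjoin G y c"
    then show "a \<le> p x"
      unfolding graph_adjoin_def using dominated_linear_graph_extension_le[OF p G lower upper] by blast
  qed
qed

lemma dominated_linear_graph_extend:
  assumes p: "sublinear p" and G: "dominated_linear_graph p x0 G" and y: "y \<notin> fst ` G"
  shows "\<exists>G'. dominated_linear_graph p x0 G' \<and> G \<subseteq> G' \<and> G' \<noteq> G"
proof -
  obtain c where lower: "\<And>x a. (x, a) \<in> G \<Longrightarrow> a - p (x - y) \<le> c"
    and upper: "\<And>z b. (z, b) \<in> G \<Longrightarrow> c \<le> p (z + y) - b"
    using dominated_linear_graph_extension_value[OF p G] by blast
  have "G \<subseteq> graph_adjoin G y c" unfolding graph_adjoin_def by force
  moreover have "(0, 0) \<in> G"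
    using G unfolding dominated_linear_graph_def by (metis mult_zero_left scaleR_zero_left)
  then have "(0 + 1 *\<^sub>R y, 0 + 1 * c) \<in> graph_adjoin G y c" unfolding graph_adjoin_def by blast
  then have "(y, c) \<in> graph_adjoin G y c" by simp
  then have "graph_adjoin G y c \<noteq> G" using y by (metis fst_conv image_eqI)
  ultimately show ?thesis using dominated_linear_graph_adjoin[OF p G y lower upper] by blast
qed

theorem hahn_banach_sublinear:
  assumes p: "sublinear p"
  obtains L where "linear L" "\<And>x. L x \<le> p x" "L x0 = p x0"
proof -
  let ?graphs = "{G. dominated_linear_graph p x0 G}"
  have "\<exists>U\<in>?graphs. \<forall>X\<in>C. X \<subseteq> U" if "C \<in> chains ?graphs" for C
  proof (cases "C = {}")
    case True
    have "dominated_linear_graph p x0 (range (\<lambda>t. (t *\<^sub>R x0, t * p x0)))"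
      by (rule dominated_linear_graph_line[OF p])
    then show ?thesis using True by blast
  next
    case False
    then show ?thesis using dominated_linear_graph_Union[OF that False] by blast
  qed
  then obtain M where M: "dominated_linear_graph p x0 M"
    and maximal: "\<And>X. dominated_linear_graph p x0 X \<Longrightarrow> M \<subseteq> X \<Longrightarrow> X = M"
    using Zorn_Lemma2[of ?graphs] by (metis mem_Collect_eq)
  have total: "x \<in> fst ` M" for x
  proof (rule ccontr)
    assume "x \<notin> fst ` M"
    from dominated_linear_graph_extend[OF p M this] maximal show False by blast
  qed
  have single_valued: "\<And>x a b. (x, a) \<in> M \<Longrightarrow> (x, b) \<in> M \<Longrightarrow> a = b"
    and add: "\<And>x a y b. (x, a) \<in> M \<Longrightarrow> (y, b) \<in> M \<Longrightarrow> (x + y, a + b) \<in> M"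
    and scale: "\<And>x a c. (x, a) \<in> M \<Longrightarrow> (c *\<^sub>R x, c * a) \<in> M"
    and dominated: "\<And>x a. (x, a) \<in> M \<Longrightarrow> a \<le> p x"
    and x0: "(x0, p x0) \<in> M"
    using M unfolding dominated_linear_graph_def by blast+
  define L where "L x = (THE a. (x, a) \<in> M)" for x
  have graph: "(x, L x) \<in> M" for x
  proof -
    obtain a where a: "(x, a) \<in> M" using total[of x] by auto
    show ?thesis unfolding L_def by (rule theI[of _ a]) (use a single_valued in blast)+
  qed
  have L_eq: "L x = a" if "(x, a) \<in> M" for x a
    using single_valued[OF graph that] .
  show ?thesis
  proof (rule that)
    show "linear L"
      by (rule linearI) (simp_all add: L_eq[OF add[OF graph graph]] L_eq[OF scale[OF graph]])
    show "L x \<le> p x" for x using dominated[OF graph] .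
    show "L x0 = p x0" using L_eq[OF x0] .
  qed
qed

section \<open>Separation by the Minkowski gauge\<close>

definition minkowski_gauge :: "'v::real_vector set \<Rightarrow> 'v \<Rightarrow> real" where
  "minkowski_gauge U v = Inf {t. t > 0 \<and> (1 / t) *\<^sub>R v \<in> U}"

locale absorbing_convex_set =
  fixes U :: "'v::real_vector set"
  assumes convex: "convex U" and zero_mem: "0 \<in> U" and absorbing: "\<And>v. \<exists>t>0. t *\<^sub>R v \<in> U"
begin

lemma gauge_set_nonempty: "{t. t > 0 \<and> (1 / t) *\<^sub>R v \<in> U} \<noteq> {}"
proof -
  obtain s where "s > 0" "s *\<^sub>R v \<in> U" using absorbing by blast
  then have "1 / s > 0 \<and> (1 / (1 / s)) *\<^sub>R v \<in> U" by simp
  then show ?thesis by blast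
qed

lemma gauge_le: "t > 0 \<Longrightarrow> (1 / t) *\<^sub>R v \<in> U \<Longrightarrow> minkowski_gauge U v \<le> t"
  unfolding minkowski_gauge_def by (rule cInf_lower) (auto intro: bdd_belowI[of _ 0])

lemma gauge_nonneg: "minkowski_gauge U v \<ge> 0"
  unfolding minkowski_gauge_def by (rule cInf_greatest[OF gauge_set_nonempty]) auto

lemma mem_if_gauge_less:
  assumes "minkowski_gauge U v < s"
  shows "(1 / s) *\<^sub>R v \<in> U"
proof -
  obtain t where t: "t > 0" "(1 / t) *\<^sub>R v \<in> U" "t < s"
    using cInf_lessD[OF gauge_set_nonempty assms[unfolded minkowski_gauge_def]] by blast
  then have "(t / s) *\<^sub>R ((1 / t) *\<^sub>R v) + (1 - t / s) *\<^sub>R 0 \<in> U"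
    by (intro convexD[OF convex _ zero_mem]) auto
  then show ?thesis using t by simp
qed

lemma gauge_add_le: "minkowski_gauge U (v + w) \<le> minkowski_gauge U v + minkowski_gauge U w"
proof (rule field_le_epsilon)
  fix e :: real assume e: "e > 0"
  define s where "s = minkowski_gauge U v + e / 2"
  define t where "t = minkowski_gauge U w + e / 2"
  have s: "s > 0" "(1 / s) *\<^sub>R v \<in> U"
    using gauge_nonneg[of v] e mem_if_gauge_less[of v s] unfolding s_def by auto
  have t: "t > 0" "(1 / t) *\<^sub>R w \<in> U"
    using gauge_nonneg[of w] e mem_if_gauge_less[of w t] unfolding t_def by auto
  have "(s / (s + t)) *\<^sub>R ((1 / s) *\<^sub>R v) + (t / (s + t)) *\<^sub>R ((1 / t) *\<^sub>R w) \<in> U"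
    using s t by (intro convexD[OF convex]) (auto simp: add_divide_distrib[symmetric])
  then have "(1 / (s + t)) *\<^sub>R (v + w) \<in> U"
    using s t by (simp add: scaleR_add_right)
  then have "minkowski_gauge U (v + w) \<le> s + t" using s t by (intro gauge_le) auto
  then show "minkowski_gauge U (v + w) \<le> minkowski_gauge U v + minkowski_gauge U w + e"
    unfolding s_def t_def by simp
qed

lemma gauge_scaleR_le:
  assumes c: "c > 0"
  shows "minkowski_gauge U (c *\<^sub>R v) \<le> c * minkowski_gauge U v"
proof (rule field_le_epsilon)
  fix e :: real assume e: "e > 0"
  define s where "s = minkowski_gauge U v + e / c"
  have "e / c > 0" using e c by simp
  then have s: "s > 0" "(1 / s) *\<^sub>R v \<in> U"
    using gauge_nonneg[of v] mem_if_gauge_less[of v s] unfolding s_def by auto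
  then have "(1 / (c * s)) *\<^sub>R (c *\<^sub>R v) \<in> U" using c by simp
  then have "minkowski_gauge U (c *\<^sub>R v) \<le> c * s" using s c by (intro gauge_le) auto
  then show "minkowski_gauge U (c *\<^sub>R v) \<le> c * minkowski_gauge U v + e"
    unfolding s_def using c by (simp add: algebra_simps)
qed

lemma sublinear_gauge: "sublinear (minkowski_gauge U)"
  unfolding sublinear_def
proof (intro conjI allI impI gauge_add_le antisym)
  fix c :: real and x :: 'v assume c: "c > 0"
  then show "minkowski_gauge U (c *\<^sub>R x) \<le> c * minkowski_gauge U x" by (rule gauge_scaleR_le)
  have "minkowski_gauge U x \<le> (1 / c) * minkowski_gauge U (c *\<^sub>R x)"
    using gauge_scaleR_le[of "1 / c" "c *\<^sub>R x"] c by simp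
  then show "c * minkowski_gauge U x \<le> minkowski_gauge U (c *\<^sub>R x)"
    using c by (simp add: field_simps)
qed

lemma gauge_le_1: "u \<in> U \<Longrightarrow> minkowski_gauge U u \<le> 1"
  using gauge_le[of 1 u] by simp

lemma gauge_ge_1: "z \<notin> U \<Longrightarrow> minkowski_gauge U z \<ge> 1"
  using mem_if_gauge_less[of z 1] by force

theorem separating_linear_functional:
  assumes "z \<notin> U"
  obtains L where "linear L" "\<And>x. L x \<le> minkowski_gauge U x" "\<And>u. u \<in> U \<Longrightarrow> L u \<le> 1" "1 \<le> L z"
proof -
  obtain L where L: "linear L" "\<And>x. L x \<le> minkowski_gauge U x" "L z = minkowski_gauge U z"
    using hahn_banach_sublinear[OF sublinear_gauge] by blast
  show ?thesis
  proof (rule that[OF L(1,2)])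
    show "L u \<le> 1" if "u \<in> U" for u using L(2)[of u] gauge_le_1[OF that] by linarith
    show "1 \<le> L z" using L(3) gauge_ge_1[OF assms] by linarith
  qed
qed

end

lemma separating_linear_functional_at_point:
  fixes A :: "'v::real_vector set"
  assumes "convex A" "c \<in> A" and absorbing: "\<And>v. \<exists>t>0. c + t *\<^sub>R v \<in> A" and "e \<notin> A"
  obtains L :: "'v \<Rightarrow> real" where "linear L" "\<And>t. t \<in> A \<Longrightarrow> L t \<le> L e" "L c < L e"
proof -
  define U where "U = (\<lambda>t. t - c) ` A"
  have "convex U" unfolding U_def using \<open>convex A\<close> by (rule convex_translation_subtract)
  moreover have "0 \<in> U" unfolding U_def using \<open>c \<in> A\<close> by (intro image_eqI[of _ _ c]) simp_all
  moreover have "\<exists>t>0. t *\<^sub>R v \<in> U" for v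
    using absorbing[of v] unfolding U_def by (metis add_diff_cancel_left' image_eqI)
  ultimately interpret U: absorbing_convex_set U by unfold_locales
  have "e - c \<notin> U"
  proof
    assume "e - c \<in> U"
    then obtain t where "t \<in> A" "e - c = t - c" unfolding U_def by blast
    then show False using \<open>e \<notin> A\<close> by (metis diff_add_cancel)
  qed
  then obtain L where L: "linear L" "\<And>x. L x \<le> minkowski_gauge U x" "\<And>u. u \<in> U \<Longrightarrow> L u \<le> 1"
    "1 \<le> L (e - c)"
    using U.separating_linear_functional by blast
  show ?thesis
  proof (rule that[OF L(1)])
    show "L t \<le> L e" if "t \<in> A" for t
    proof -
      have "t - c \<in> U" unfolding U_def using that by blast
      then show ?thesis using L(3)[of "t - c"] L(4) by (simp add: linear_diff[OF L(1)])
    qed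
    show "L c < L e" using L(4) by (simp add: linear_diff[OF L(1)])
  qed
qed

lemma minkowski_gauge_le_norm:
  fixes U :: "'v::real_normed_vector set"
  assumes "absorbing_convex_set U" and r: "r > 0" and ball: "ball 0 r \<subseteq> U"
  shows "minkowski_gauge U v \<le> norm v / r"
proof (rule field_le_epsilon)
  interpret absorbing_convex_set U by fact
  fix e :: real assume e: "e > 0"
  define s where "s = norm v / r + e"
  have s: "s > 0" unfolding s_def using e r by (simp add: add_nonneg_pos)
  have "norm v < r * s" unfolding s_def using r e by (simp add: algebra_simps)
  then have "norm ((1 / s) *\<^sub>R v) < r" using s by (simp add: field_simps)
  then have "(1 / s) *\<^sub>R v \<in> U" using ball by auto
  then show "minkowski_gauge U v \<le> norm v / r + e" using gauge_le[OF s] unfolding s_def by simp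
qed

lemma absorbing_convex_set_if_ball:
  fixes U :: "'v::real_normed_vector set"
  assumes "convex U" "r > 0" "ball 0 r \<subseteq> U"
  shows "absorbing_convex_set U"
proof
  show "\<exists>t>0. t *\<^sub>R v \<in> U" for v
  proof -
    define t where "t = r / (norm v + 1)"
    have "t > 0" using \<open>r > 0\<close> by (simp add: t_def add_nonneg_pos)
    moreover have "norm (t *\<^sub>R v) < r"
      using \<open>r > 0\<close> by (simp add: t_def divide_less_eq add_nonneg_pos)
    ultimately show ?thesis using assms(3) by force
  qed
qed (use assms in auto)

lemma bounded_linear_if_le_gauge:
  fixes U :: "'v::real_normed_vector set"
  assumes "absorbing_convex_set U" "r > 0" "ball 0 r \<subseteq> U"
    and "linear L" and le_gauge: "\<And>x. L x \<le> minkowski_gauge U x"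
  shows "bounded_linear L"
proof -
  have "norm (L x) \<le> norm x * (1 / r)" for x
    using le_gauge[of x] le_gauge[of "- x"] linear_neg[OF \<open>linear L\<close>, of x]
      minkowski_gauge_le_norm[OF assms(1-3), of x] minkowski_gauge_le_norm[OF assms(1-3), of "- x"]
    by auto
  then show ?thesis
    using \<open>linear L\<close> by (intro bounded_linear_intro[where K = "1 / r"]) (auto simp: linear_add linear_scale)
qed

theorem separating_blinfun:
  fixes A B :: "'v::real_normed_vector set"
  assumes A: "convex A" "A \<noteq> {}" and B: "convex B" "ball b0 r \<subseteq> B" "r > 0"
    and disjoint: "A \<inter> B = {}"
  obtains \<phi> :: "'v \<Rightarrow>\<^sub>L real" where "\<phi> \<noteq> 0" "\<And>a b. a \<in> A \<Longrightarrow> b \<in> B \<Longrightarrow> \<phi> a \<le> \<phi> b"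
proof -
  obtain a0 where a0: "a0 \<in> A" using A by auto
  define K where "K = (\<Union>b\<in>B. \<Union>a\<in>A. {b - a})"
  define U where "U = (\<lambda>k. k - (b0 - a0)) ` K"
  have "convex U" unfolding U_def K_def
    by (intro convex_translation_subtract convex_differences A B)
  have ball: "ball 0 r \<subseteq> U"
  proof
    fix v :: 'v assume "v \<in> ball 0 r"
    then have "b0 + v \<in> B" using B(2) by (auto simp: dist_norm)
    then have "(b0 + v) - a0 \<in> K" unfolding K_def using a0 by blast
    then show "v \<in> U" unfolding U_def by (force intro: image_eqI[of _ _ "(b0 + v) - a0"])
  qed
  interpret U: absorbing_convex_set U
    using absorbing_convex_set_if_ball[OF \<open>convex U\<close> B(3) ball] .
  have "- (b0 - a0) \<notin> U"
    using disjoint unfolding U_def K_def by auto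
  then obtain L where L: "linear L" "\<And>x. L x \<le> minkowski_gauge U x" "\<And>u. u \<in> U \<Longrightarrow> L u \<le> 1"
    "1 \<le> L (- (b0 - a0))"
    using U.separating_linear_functional by blast
  have "bounded_linear L"
    using bounded_linear_if_le_gauge[OF U.absorbing_convex_set_axioms B(3) ball L(1,2)] .
  then have apply_L: "(- Blinfun L) x = - L x" for x
    by (simp add: bounded_linear_Blinfun_apply uminus_blinfun.rep_eq)
  have L_K: "L k \<le> 0" if "k \<in> K" for k
  proof -
    have "L (k - (b0 - a0)) \<le> 1" using that L(3) unfolding U_def by blast
    then show ?thesis using L(4) by (simp add: linear_diff[OF L(1)] linear_neg[OF L(1)])
  qed
  show ?thesis
  proof (rule that[of "- Blinfun L"])
    show "- Blinfun L \<noteq> 0"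
    proof
      assume "- Blinfun L = 0"
      then show False using apply_L[of "- (b0 - a0)"] L(4) by simp
    qed
    show "(- Blinfun L) a \<le> (- Blinfun L) b" if "a \<in> A" "b \<in> B" for a b
      using L_K[of "b - a"] that apply_L unfolding K_def by (auto simp: linear_diff[OF L(1)])
  qed
qed

section \<open>The Fenchel sum rule\<close>

lemma blinfun_eq_0_if_bounded_above:
  fixes \<phi> :: "'a::real_normed_vector \<Rightarrow>\<^sub>L real"
  assumes "\<And>z. \<phi> z \<le> c"
  shows "\<phi> = 0"
proof (rule blinfun_eqI, rule ccontr)
  fix z assume "blinfun_apply \<phi> z \<noteq> blinfun_apply 0 z"
  then have "\<phi> (((c + 1) / \<phi> z) *\<^sub>R z) = c + 1" by (simp add: blinfun.scaleR_right)
  then show False using assms[of "((c + 1) / \<phi> z) *\<^sub>R z"] by simp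
qed

lemma blinfun_eq_0_if_nonneg_on_ball:
  fixes \<phi> :: "'a::real_normed_vector \<Rightarrow>\<^sub>L real"
  assumes "\<delta> > 0" and nonneg: "\<And>w. norm w < \<delta> \<Longrightarrow> 0 \<le> \<phi> w"
  shows "\<phi> = 0"
proof -
  have "0 \<le> \<phi> z" for z
  proof -
    define t where "t = \<delta> / (norm z + 1)"
    have "t > 0" using \<open>\<delta> > 0\<close> by (simp add: t_def add_nonneg_pos)
    moreover have "norm (t *\<^sub>R z) < \<delta>"
      using \<open>\<delta> > 0\<close> by (simp add: t_def divide_less_eq add_nonneg_pos)
    ultimately show ?thesis
      using nonneg[of "t *\<^sub>R z"] by (simp add: blinfun.scaleR_right zero_le_mult_iff)
  qed
  then have "- \<phi> = 0" by (intro blinfun_eq_0_if_bounded_above[of _ 0]) (auto simp: uminus_blinfun.rep_eq)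
  then show ?thesis by simp
qed

lemma nonpos_if_multiples_bounded:
  fixes c K :: real
  assumes "\<And>t. t > 0 \<Longrightarrow> t * c \<le> K"
  shows "c \<le> 0"
proof (rule ccontr)
  assume "\<not> c \<le> 0"
  then have "((\<bar>K\<bar> + 1) / c) * c = \<bar>K\<bar> + 1" by simp
  then show False using assms[of "(\<bar>K\<bar> + 1) / c"] \<open>\<not> c \<le> 0\<close> by simp
qed

definition blinfun_horizontal :: "('a::real_normed_vector \<times> real) \<Rightarrow>\<^sub>L real \<Rightarrow> 'a \<Rightarrow>\<^sub>L real" where
  "blinfun_horizontal \<phi> = Blinfun (\<lambda>x. \<phi> (x, 0))"

lemma blinfun_horizontal_apply [simp]: "blinfun_horizontal \<phi> x = \<phi> (x, 0)"
proof -
  have "bounded_linear (\<lambda>x. \<phi> (x, 0))"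
    by (intro bounded_linear_compose[OF blinfun.bounded_linear_right]
        bounded_linear_Pair bounded_linear_ident bounded_linear_zero)
  then show ?thesis unfolding blinfun_horizontal_def by (simp add: bounded_linear_Blinfun_apply)
qed

lemma blinfun_apply_Pair:
  fixes \<phi> :: "('a::real_normed_vector \<times> real) \<Rightarrow>\<^sub>L real"
  shows "\<phi> (x, r) = blinfun_horizontal \<phi> x + r * \<phi> (0, 1)"
proof -
  have "(x, r) = (x, 0) + r *\<^sub>R (0, 1)" by simp
  then show ?thesis by (metis blinfun.add_right blinfun.scaleR_right blinfun_horizontal_apply real_scaleR_def)
qed

lemma blinfun_eq_0_if_horizontal_vertical:
  fixes \<phi> :: "('a::real_normed_vector \<times> real) \<Rightarrow>\<^sub>L real"
  assumes "blinfun_horizontal \<phi> = 0" "\<phi> (0, 1) = 0"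
  shows "\<phi> = 0"
  by (rule blinfun_eqI) (metis assms blinfun_apply_Pair mult_zero_right zero_blinfun.rep_eq add_0 prod.collapse)

lemma convex_hypograph:
  assumes "concave_on S f"
  shows "convex {(x, r). x \<in> S \<and> r \<le> f x}"
  unfolding convex_alt
proof (intro ballI allI impI)
  fix p q :: "'a \<times> real" and u :: real
  assume "p \<in> {(x, r). x \<in> S \<and> r \<le> f x}" "q \<in> {(x, r). x \<in> S \<and> r \<le> f x}" "0 \<le> u \<and> u \<le> 1"
  moreover have "convex S" using assms by (simp add: concave_on_def convex_on_def)
  ultimately show "(1 - u) *\<^sub>R p + u *\<^sub>R q \<in> {(x, r). x \<in> S \<and> r \<le> f x}"
    using concave_onD[OF assms, of u "fst p" "fst q"]
    by (auto simp: convexD_alt intro!: order_trans[OF add_mono[OF mult_left_mono mult_left_mono]])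
qed

lemma convex_strict_epigraph:
  assumes "convex_on UNIV f"
  shows "convex {(x, r). f x < r}"
  unfolding convex_alt
proof (intro ballI allI impI)
  fix p q :: "'a \<times> real" and u :: real
  assume pq: "p \<in> {(x, r). f x < r}" "q \<in> {(x, r). f x < r}" and u: "0 \<le> u \<and> u \<le> 1"
  have "f ((1 - u) *\<^sub>R fst p + u *\<^sub>R fst q) \<le> (1 - u) * f (fst p) + u * f (fst q)"
    using convex_onD[OF assms] u by auto
  also have "\<dots> < (1 - u) * snd p + u * snd q"
  proof (cases "u = 0")
    case False
    then show ?thesis
      using pq u by (intro add_le_less_mono mult_left_mono mult_strict_left_mono) auto
  qed (use pq in auto)
  finally show "(1 - u) *\<^sub>R p + u *\<^sub>R q \<in> {(x, r). f x < r}" by (simp add: case_prod_beta)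
qed

lemma split_bound:
  fixes a :: "'a \<Rightarrow> real" and b :: "'b \<Rightarrow> real"
  assumes "x0 \<in> D" and bound: "\<And>x z. x \<in> D \<Longrightarrow> a x + b z \<le> c"
  obtains T0 T1 where "\<And>x. x \<in> D \<Longrightarrow> a x \<le> T0" "\<And>z. b z \<le> T1" "T0 + T1 \<le> c"
proof -
  have bdd: "bdd_above (range b)"
    using bound[OF \<open>x0 \<in> D\<close>] by (intro bdd_aboveI[of _ "c - a x0"]) (auto simp: algebra_simps)
  show ?thesis
  proof (rule that[of "c - Sup (range b)" "Sup (range b)"])
    show "a x \<le> c - Sup (range b)" if "x \<in> D" for x
    proof -
      have "Sup (range b) \<le> c - a x" using bound[OF that] by (intro cSup_least) (auto simp: algebra_simps)
      then show ?thesis by linarith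
    qed
  qed (auto intro: cSup_upper[OF _ bdd])
qed

lemma open_strict_epigraph:
  fixes h :: "'a::topological_space \<Rightarrow> real"
  assumes "continuous_on UNIV h"
  shows "open {(z, r). h z < r}"
proof -
  have "continuous_on UNIV (\<lambda>p. h (fst p))"
    using continuous_on_compose[OF continuous_on_fst[OF continuous_on_id] assms[THEN continuous_on_subset]]
    by (simp add: comp_def)
  then have "open {p. h (fst p) < snd p}" by (intro open_Collect_less continuous_intros)
  moreover have "{p. h (fst p) < snd p} = {(z, r). h z < r}" by auto
  ultimately show ?thesis by simp
qed

lemma fenchel_separating_hyperplane:
  fixes g h :: "'a::real_normed_vector \<Rightarrow> real"
  assumes g: "convex_on D g" and "x0 \<in> D"
    and h: "convex_on UNIV h" "continuous_on UNIV h"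
    and bound: "\<And>x. x \<in> D \<Longrightarrow> \<alpha> \<le> g x + h x"
  obtains s and \<psi> :: "'a \<Rightarrow>\<^sub>L real" where "s > 0"
    and "\<And>x r z r'. x \<in> D \<Longrightarrow> r \<le> \<alpha> - g x \<Longrightarrow> h z < r' \<Longrightarrow> \<psi> x + r * s \<le> \<psi> z + r' * s"
proof -
  define A where "A = {(x, r). x \<in> D \<and> r \<le> \<alpha> - g x}"
  define B where "B = {(z, r). h z < r}"
  have "convex A" unfolding A_def
    using g by (intro convex_hypograph concave_on_diff) (auto simp: concave_on_const convex_on_imp_convex)
  have "convex B" unfolding B_def using h(1) by (rule convex_strict_epigraph)
  have "A \<noteq> {}" unfolding A_def using \<open>x0 \<in> D\<close> by auto
  have "open B" unfolding B_def using h(2) by (rule open_strict_epigraph)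
  moreover have "(0, h 0 + 1) \<in> B" unfolding B_def by simp
  ultimately obtain \<rho> where "\<rho> > 0" and ball: "ball (0, h 0 + 1) \<rho> \<subseteq> B"
    using open_contains_ball by blast
  have "A \<inter> B = {}"
  proof -
    have False if "x \<in> D" "r \<le> \<alpha> - g x" "h x < r" for x r
      using bound[OF that(1)] that(2,3) by linarith
    then show ?thesis unfolding A_def B_def by blast
  qed
  then obtain \<phi> :: "('a \<times> real) \<Rightarrow>\<^sub>L real" where "\<phi> \<noteq> 0"
    and separates: "\<And>a b. a \<in> A \<Longrightarrow> b \<in> B \<Longrightarrow> \<phi> a \<le> \<phi> b"
    using separating_blinfun[OF \<open>convex A\<close> \<open>A \<noteq> {}\<close> \<open>convex B\<close> ball \<open>\<rho> > 0\<close>] by blast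
  define \<psi> where "\<psi> = blinfun_horizontal \<phi>"
  define s where "s = \<phi> (0, 1)"
  have separates': "\<psi> x + r * s \<le> \<psi> z + r' * s" if "x \<in> D" "r \<le> \<alpha> - g x" "h z < r'" for x r z r'
    using separates[of "(x, r)" "(z, r')"] that blinfun_apply_Pair[of \<phi> x r] blinfun_apply_Pair[of \<phi> z r']
    unfolding A_def B_def \<psi>_def s_def by simp
  have "s \<ge> 0"
  proof -
    have "t * (- s) \<le> \<psi> 0 + (h 0 + 1) * s - \<psi> x0 - (\<alpha> - g x0) * s" if "t > 0" for t
      using separates'[OF \<open>x0 \<in> D\<close>, of "\<alpha> - g x0 - t" 0 "h 0 + 1"] that by (simp add: algebra_simps)
    then have "- s \<le> 0" by (rule nonpos_if_multiples_bounded)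
    then show ?thesis by simp
  qed
  moreover have "s \<noteq> 0"
  proof
    assume "s = 0"
    then have "\<psi> x0 \<le> \<psi> z" for z using separates'[OF \<open>x0 \<in> D\<close> order_refl, of z "h z + 1"] by simp
    then have "\<psi> = 0"
      using blinfun_eq_0_if_bounded_above[of "- \<psi>" "- \<psi> x0"] by (simp add: uminus_blinfun.rep_eq)
    then show False
      using \<open>\<phi> \<noteq> 0\<close> \<open>s = 0\<close> blinfun_eq_0_if_horizontal_vertical unfolding \<psi>_def s_def by blast
  qed
  ultimately have "s > 0" by simp
  then show ?thesis using separates' by (rule that)
qed

theorem fenchel_sum_rule:
  fixes g h :: "'a::real_normed_vector \<Rightarrow> real"
  assumes g: "convex_on D g" and "x0 \<in> D"
    and h: "convex_on UNIV h" "continuous_on UNIV h"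
    and bound: "\<And>x. x \<in> D \<Longrightarrow> \<alpha> \<le> g x + h x"
  obtains y :: "'a \<Rightarrow>\<^sub>L real" and T0 T1 where "\<And>x. x \<in> D \<Longrightarrow> y x - g x \<le> T0"
    and "\<And>z. - y z - h z \<le> T1" and "T0 + T1 \<le> - \<alpha>"
proof -
  obtain s and \<psi> :: "'a \<Rightarrow>\<^sub>L real" where "s > 0"
    and separates: "\<And>x r z r'. x \<in> D \<Longrightarrow> r \<le> \<alpha> - g x \<Longrightarrow> h z < r' \<Longrightarrow> \<psi> x + r * s \<le> \<psi> z + r' * s"
    using fenchel_separating_hyperplane[OF assms] by blast
  define y where "y = (1 / s) *\<^sub>R \<psi>"
  have "(y x - g x) + (- y z - h z) \<le> - \<alpha>" if "x \<in> D" for x z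
  proof (rule field_le_epsilon)
    fix e :: real assume "e > 0"
    then have "\<psi> x + (\<alpha> - g x) * s \<le> \<psi> z + (h z + e) * s"
      using separates[OF that order_refl] by simp
    then have "(\<psi> x + (\<alpha> - g x) * s) / s \<le> (\<psi> z + (h z + e) * s) / s"
      using \<open>s > 0\<close> by (intro divide_right_mono) auto
    then show "(y x - g x) + (- y z - h z) \<le> - \<alpha> + e"
      using \<open>s > 0\<close> by (simp add: y_def add_divide_distrib blinfun.scaleR_left)
  qed
  then obtain T0 T1 where "\<And>x. x \<in> D \<Longrightarrow> y x - g x \<le> T0" "\<And>z. - y z - h z \<le> T1" "T0 + T1 \<le> - \<alpha>"
    using split_bound[OF \<open>x0 \<in> D\<close>, of "\<lambda>x. y x - g x" "\<lambda>z. - y z - h z"] by blast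
  then show ?thesis by (rule that)
qed

lemma convex_on_diff_blinfun:
  fixes y :: "'a::real_normed_vector \<Rightarrow>\<^sub>L real"
  assumes "convex_on D g"
  shows "convex_on D (\<lambda>x. g x - y x)"
proof (rule convex_onI)
  show "convex D" using assms by (rule convex_on_imp_convex)
  fix t :: real and x z :: 'a assume "0 < t" "t < 1" "x \<in> D" "z \<in> D"
  then have "g ((1 - t) *\<^sub>R x + t *\<^sub>R z) \<le> (1 - t) * g x + t * g z"
    using convex_onD[OF assms] by simp
  moreover have "y ((1 - t) *\<^sub>R x + t *\<^sub>R z) = (1 - t) * y x + t * y z"
    by (simp add: blinfun.add_right blinfun.scaleR_right)
  ultimately show "g ((1 - t) *\<^sub>R x + t *\<^sub>R z) - y ((1 - t) *\<^sub>R x + t *\<^sub>R z)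
      \<le> (1 - t) * (g x - y x) + t * (g z - y z)"
    by (simp add: algebra_simps)
qed

lemma fenchel_sum_rule_finite:
  fixes g :: "'a::real_normed_vector \<Rightarrow> real" and h :: "nat \<Rightarrow> 'a \<Rightarrow> real"
  assumes "x0 \<in> D" and "convex_on D g"
    and "\<And>i. i \<in> {1..k} \<Longrightarrow> convex_on UNIV (h i)" "\<And>i. i \<in> {1..k} \<Longrightarrow> continuous_on UNIV (h i)"
    and "\<And>x. x \<in> D \<Longrightarrow> \<alpha> \<le> g x + (\<Sum>i=1..k. h i x)"
  shows "\<exists>(y :: nat \<Rightarrow> 'a \<Rightarrow>\<^sub>L real) T. y 0 + (\<Sum>i=1..k. y i) = (0 :: 'a \<Rightarrow>\<^sub>L real)
      \<and> (\<forall>x\<in>D. y 0 x - g x \<le> T 0) \<and> (\<forall>i\<in>{1..k}. \<forall>z. y i z - h i z \<le> T i)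
      \<and> T 0 + (\<Sum>i=1..k. T i) \<le> - \<alpha>"
  using assms(2-)
proof (induction k arbitrary: g \<alpha>)
  case 0
  then show ?case by (intro exI[of _ "\<lambda>_. 0"] exI[of _ "\<lambda>_. - \<alpha>"]) auto
next
  case (Suc k)
  let ?h = "h (Suc k)"
  have h_Suc: "convex_on UNIV ?h" "continuous_on UNIV ?h" using Suc.prems(2,3) by auto
  have h_k: "\<And>i. i \<in> {1..k} \<Longrightarrow> convex_on UNIV (h i)" "\<And>i. i \<in> {1..k} \<Longrightarrow> continuous_on UNIV (h i)"
    using Suc.prems(2,3) by auto
  \<comment> \<open>Absorb the last function into \<open>g\<close>, then split it off again with the two-term sum rule.\<close>
  have convex: "convex_on D (\<lambda>x. g x + ?h x)"
    using Suc.prems(1) convex_on_subset[OF h_Suc(1) subset_UNIV convex_on_imp_convex[OF Suc.prems(1)]]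
    by (rule convex_on_add)
  have bound: "\<alpha> \<le> (g x + ?h x) + (\<Sum>i=1..k. h i x)" if "x \<in> D" for x
    using Suc.prems(4)[OF that] by (simp add: algebra_simps)
  obtain y :: "nat \<Rightarrow> 'a \<Rightarrow>\<^sub>L real" and T where y: "y 0 + (\<Sum>i=1..k. y i) = 0"
      "\<And>x. x \<in> D \<Longrightarrow> y 0 x - (g x + ?h x) \<le> T 0"
      "\<And>i z. i \<in> {1..k} \<Longrightarrow> y i z - h i z \<le> T i"
      "T 0 + (\<Sum>i=1..k. T i) \<le> - \<alpha>"
    using Suc.IH[OF convex h_k bound] by blast
  have shifted_bound: "- T 0 \<le> (g x - y 0 x) + ?h x" if "x \<in> D" for x
    using y(2)[OF that] by simp
  obtain u :: "'a \<Rightarrow>\<^sub>L real" and S0 S1 where u: "\<And>x. x \<in> D \<Longrightarrow> u x - (g x - y 0 x) \<le> S0"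
    "\<And>z. - u z - ?h z \<le> S1" "S0 + S1 \<le> - (- T 0)"
    using fenchel_sum_rule[OF convex_on_diff_blinfun[OF Suc.prems(1), of "y 0"] \<open>x0 \<in> D\<close> h_Suc shifted_bound]
    by blast
  define y' where "y' = y(0 := u + y 0, Suc k := - u)"
  define T' where "T' = T(0 := S0, Suc k := S1)"
  have "(\<Sum>i=1..k. y' i) = (\<Sum>i=1..k. y i)" "(\<Sum>i=1..k. T' i) = (\<Sum>i=1..k. T i)"
    unfolding y'_def T'_def by (auto intro!: sum.cong)
  then have sums: "(\<Sum>i=1..Suc k. y' i) = (\<Sum>i=1..k. y i) - u" "(\<Sum>i=1..Suc k. T' i) = (\<Sum>i=1..k. T i) + S1"
    by (simp_all add: y'_def T'_def)
  show ?case
  proof (intro exI[of _ y'] exI[of _ T'] conjI ballI allI)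
    show "y' 0 + (\<Sum>i=1..Suc k. y' i) = 0" using y(1) sums(1) by (simp add: y'_def algebra_simps)
    show "y' 0 x - g x \<le> T' 0" if "x \<in> D" for x
      using u(1)[OF that] by (simp add: y'_def T'_def blinfun.add_left)
    show "y' i z - h i z \<le> T' i" if "i \<in> {1..Suc k}" for i z
      using that y(3)[of i z] u(2)[of z]
      by (cases "i = Suc k") (auto simp: y'_def T'_def uminus_blinfun.rep_eq)
    show "T' 0 + (\<Sum>i=1..Suc k. T' i) \<le> - \<alpha>" using sums(2) u(3) y(4) by (simp add: T'_def)
  qed
qed

section \<open>Proper convex lower semicontinuous functions\<close>

lemma closed_epigraph_if_lsc:
  fixes f :: "'a::topological_space \<Rightarrow> ereal"
  assumes "lsc_ext f"
  shows "closed {(x, r::real). f x \<le> ereal r}"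
  unfolding closed_def open_prod_def
proof (intro ballI)
  fix p assume "p \<in> - {(x, r::real). f x \<le> ereal r}"
  then obtain x r where p: "p = (x, r)" "ereal r < f x" by (cases p) auto
  then obtain r' where "ereal r < ereal r'" "ereal r' < f x" using ereal_dense2 by blast
  then have r': "r < r'" "ereal r' < f x" by simp_all
  have "open (- {y. f y \<le> ereal r'})" using assms unfolding lsc_ext_def by auto
  moreover have "(- {y. f y \<le> ereal r'}) \<times> {..<r'} \<subseteq> - {(x, r). f x \<le> ereal r}"
    by (auto simp: not_le) (meson ereal_less_eq(3) less_imp_le order_trans)
  ultimately show "\<exists>A B. open A \<and> open B \<and> p \<in> A \<times> B \<and> A \<times> B \<subseteq> - {(x, r). f x \<le> ereal r}"
    using p r' by (intro exI[of _ "- {y. f y \<le> ereal r'}"] exI[of _ "{..<r'}"]) (auto simp: not_le)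
qed

lemma epigraph_separating_hyperplane:
  fixes f :: "'a::real_normed_vector \<Rightarrow> ereal"
  assumes "convex_ext f" "lsc_ext f" and a: "f x0 = ereal a"
  obtains s and \<psi> :: "'a \<Rightarrow>\<^sub>L real"
  where "s < 0" "\<And>x r. f x \<le> ereal r \<Longrightarrow> \<psi> x + r * s \<le> \<psi> x0 + (a - 1) * s"
proof -
  define E where "E = {(x, r::real). f x \<le> ereal r}"
  have "convex E" using \<open>convex_ext f\<close> unfolding convex_ext_def E_def .
  have "(x0, a) \<in> E" unfolding E_def using a by simp
  have "open (- E)" using closed_epigraph_if_lsc[OF \<open>lsc_ext f\<close>] unfolding E_def by (simp add: open_Compl)
  moreover have "(x0, a - 1) \<in> - E" unfolding E_def using a by simp
  ultimately obtain \<delta> where "\<delta> > 0" and ball: "ball (x0, a - 1) \<delta> \<subseteq> - E"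
    using open_contains_ball by blast
  have "E \<noteq> {}" "E \<inter> ball (x0, a - 1) \<delta> = {}" using \<open>(x0, a) \<in> E\<close> ball by auto
  then obtain \<phi> :: "('a \<times> real) \<Rightarrow>\<^sub>L real" where "\<phi> \<noteq> 0"
    and separates: "\<And>e b. e \<in> E \<Longrightarrow> b \<in> ball (x0, a - 1) \<delta> \<Longrightarrow> \<phi> e \<le> \<phi> b"
    using separating_blinfun[OF \<open>convex E\<close> _ convex_ball order_refl \<open>\<delta> > 0\<close>] by metis
  define \<psi> where "\<psi> = blinfun_horizontal \<phi>"
  define s where "s = \<phi> (0, 1)"
  have separates': "\<psi> x + r * s \<le> \<psi> (x0 + w) + (a - 1) * s" if "f x \<le> ereal r" "norm w < \<delta>" for x r w
    using separates[of "(x, r)" "(x0 + w, a - 1)"] that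
      blinfun_apply_Pair[of \<phi> x r] blinfun_apply_Pair[of \<phi> "x0 + w" "a - 1"]
    unfolding E_def \<psi>_def s_def by (simp add: dist_norm)
  have "s \<le> 0" using separates'[of x0 a 0] a \<open>\<delta> > 0\<close> by (simp add: algebra_simps)
  moreover have "s \<noteq> 0"
  proof
    assume "s = 0"
    then have "0 \<le> \<psi> w" if "norm w < \<delta>" for w
      using separates'[of x0 a w] that a by (simp add: blinfun.add_right)
    then have "\<psi> = 0" using blinfun_eq_0_if_nonneg_on_ball[OF \<open>\<delta> > 0\<close>] by blast
    then show False
      using \<open>\<phi> \<noteq> 0\<close> \<open>s = 0\<close> blinfun_eq_0_if_horizontal_vertical unfolding \<psi>_def s_def by blast
  qed
  ultimately have "s < 0" by simp
  then show ?thesis using separates'[of _ _ 0] \<open>\<delta> > 0\<close> by (intro that) auto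
qed

lemma affine_minorant:
  fixes f :: "'a::real_normed_vector \<Rightarrow> ereal"
  assumes proper: "proper_fun f" and "convex_ext f" and "lsc_ext f"
  obtains u :: "'a \<Rightarrow>\<^sub>L real" and c where "\<And>x. ereal (u x + c) \<le> f x"
proof -
  obtain x0 where "f x0 \<noteq> \<infinity>" "f x0 \<noteq> - \<infinity>" using proper unfolding proper_fun_def by blast
  then obtain a where a: "f x0 = ereal a" by (cases "f x0") auto
  obtain s and \<psi> :: "'a \<Rightarrow>\<^sub>L real" where "s < 0"
    and separates: "\<And>x r. f x \<le> ereal r \<Longrightarrow> \<psi> x + r * s \<le> \<psi> x0 + (a - 1) * s"
    using epigraph_separating_hyperplane[OF assms(2,3) a] by blast
  show ?thesis
  proof (rule that[of "(- 1 / s) *\<^sub>R \<psi>" "\<psi> x0 / s + (a - 1)"])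
    fix x
    show "ereal (((- 1 / s) *\<^sub>R \<psi>) x + (\<psi> x0 / s + (a - 1))) \<le> f x"
    proof (cases "f x")
      case (real v)
      then have "(\<psi> x0 - \<psi> x + (a - 1) * s) / s \<le> v"
        using separates[of x v] \<open>s < 0\<close> by (simp add: divide_le_eq)
      moreover have "(\<psi> x0 - \<psi> x + (a - 1) * s) / s = ((- 1 / s) *\<^sub>R \<psi>) x + (\<psi> x0 / s + (a - 1))"
        using \<open>s < 0\<close> by (simp add: blinfun.scaleR_left uminus_blinfun.rep_eq field_simps)
      ultimately show ?thesis using real by simp
    qed (use proper in \<open>auto simp: proper_fun_def\<close>)
  qed
qed

lemma proper_convex_lsc_ereal:
  fixes f :: "'a::real_normed_vector \<Rightarrow> real"
  assumes "convex_on UNIV f" "continuous_on UNIV f"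
  shows "proper_fun (\<lambda>x. ereal (f x))" "convex_ext (\<lambda>x. ereal (f x))" "lsc_ext (\<lambda>x. ereal (f x))"
proof -
  show "proper_fun (\<lambda>x. ereal (f x))" unfolding proper_fun_def by simp
  have "{(x, r). ereal (f x) \<le> ereal r} = epigraph UNIV f" by (auto simp: epigraph_def)
  then show "convex_ext (\<lambda>x. ereal (f x))"
    unfolding convex_ext_def using convex_epigraphI[OF assms(1)] by simp
  have "closed {x. ereal (f x) \<le> c}" for c
  proof (cases c)
    case (real r)
    then show ?thesis using closed_Collect_le[OF assms(2) continuous_on_const] by simp
  qed auto
  then show "lsc_ext (\<lambda>x. ereal (f x))" unfolding lsc_ext_def by blast
qed

lemma convex_on_real_of_ereal:
  assumes proper: "proper_fun f" and "convex_ext f"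
  shows "convex_on {x. f x \<noteq> \<infinity>} (\<lambda>x. real_of_ereal (f x))"
proof -
  have finite: "f x = ereal (real_of_ereal (f x))" if "f x \<noteq> \<infinity>" for x
    using that proper unfolding proper_fun_def by (cases "f x") auto
  have combination: "(1 - t) *\<^sub>R x + t *\<^sub>R z \<in> {x. f x \<noteq> \<infinity>}
      \<and> real_of_ereal (f ((1 - t) *\<^sub>R x + t *\<^sub>R z)) \<le> (1 - t) * real_of_ereal (f x) + t * real_of_ereal (f z)"
    if "f x \<noteq> \<infinity>" "f z \<noteq> \<infinity>" "0 \<le> t" "t \<le> 1" for x z and t :: real
  proof -
    have "(1 - t) *\<^sub>R (x, real_of_ereal (f x)) + t *\<^sub>R (z, real_of_ereal (f z)) \<in> {(x, r). f x \<le> ereal r}"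
      using \<open>convex_ext f\<close> finite[OF that(1)] finite[OF that(2)] that(3,4)
      unfolding convex_ext_def by (intro convexD_alt) auto
    then have "f ((1 - t) *\<^sub>R x + t *\<^sub>R z) \<le> ereal ((1 - t) * real_of_ereal (f x) + t * real_of_ereal (f z))"
      by simp
    moreover from this have "f ((1 - t) *\<^sub>R x + t *\<^sub>R z) \<noteq> \<infinity>" by auto
    ultimately show ?thesis using finite by (metis mem_Collect_eq ereal_less_eq(3))
  qed
  then have "convex {x. f x \<noteq> \<infinity>}" unfolding convex_alt by blast
  then show ?thesis using combination by (intro convex_onI) auto
qed

lemma biconj_le_0_imp_le:
  fixes u :: "'a::real_normed_vector \<Rightarrow>\<^sub>L real"
  assumes "biconj f xss \<le> 0" and "\<And>x. ereal (u x) - f x \<le> ereal T"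
  shows "xss u \<le> T"
proof -
  have "Defs.conj f u \<le> ereal T"
    unfolding Defs.conj_def using assms(2) by (rule SUP_least)
  moreover have "ereal (xss u) - Defs.conj f u \<le> biconj f xss"
    unfolding biconj_def by (rule SUP_upper) simp
  then have "ereal (xss u) - Defs.conj f u \<le> 0" using assms(1) by (rule order_trans)
  ultimately show ?thesis by (cases "Defs.conj f u") auto
qed

text \<open>Here \<open>y\<close> is bounded only on the domain of \<open>f\<close>: adding large multiples of \<open>y\<close> to an
  affine minorant \<open>u + d\<close> keeps the conjugate finite, and \<open>x** (u + t y) \<le> t T - d\<close> for all
  \<open>t > 0\<close> forces \<open>x** y \<le> T\<close>.\<close>

lemma biconj_le_0_imp_le_on_dom:
  fixes y :: "'a::real_normed_vector \<Rightarrow>\<^sub>L real"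
  assumes proper: "proper_fun f" and "convex_ext f" "lsc_ext f"
    and biconj: "biconj f xss \<le> 0" and bound: "\<And>x. f x \<noteq> \<infinity> \<Longrightarrow> y x \<le> T"
  shows "xss y \<le> T"
proof -
  obtain u :: "'a \<Rightarrow>\<^sub>L real" and d where minorant: "\<And>x. ereal (u x + d) \<le> f x"
    using affine_minorant[OF assms(1-3)] by blast
  have "t * (xss y - T) \<le> - d - xss u" if "t > 0" for t
  proof -
    have "xss (u + t *\<^sub>R y) \<le> t * T - d"
    proof (rule biconj_le_0_imp_le[OF biconj])
      fix x
      show "ereal ((u + t *\<^sub>R y) x) - f x \<le> ereal (t * T - d)"
      proof (cases "f x = \<infinity>")
        case False
        then have "t * y x \<le> t * T" using bound[of x] \<open>t > 0\<close> by simp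
        moreover obtain v where "f x = ereal v" using False proper by (cases "f x") (auto simp: proper_fun_def)
        ultimately show ?thesis using minorant[of x] by (simp add: blinfun.add_left blinfun.scaleR_left)
      qed simp
    qed
    then show ?thesis by (simp add: blinfun.add_right blinfun.scaleR_right algebra_simps)
  qed
  then have "xss y - T \<le> 0" by (rule nonpos_if_multiples_bounded)
  then show ?thesis by simp
qed

lemma biconj_le_0_imp_scaled_le:
  fixes y :: "'a::real_normed_vector \<Rightarrow>\<^sub>L real"
  assumes proper: "proper_fun f" and "convex_ext f" "lsc_ext f"
    and biconj: "biconj f xss \<le> 0" and "c \<ge> 0"
    and bound: "\<And>x. f x \<noteq> \<infinity> \<Longrightarrow> y x - c * real_of_ereal (f x) \<le> T"
  shows "xss y \<le> T"
proof (cases "c = 0")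
  case True
  then show ?thesis using biconj_le_0_imp_le_on_dom[OF assms(1-4)] bound by simp
next
  case False
  then have "c > 0" using \<open>c \<ge> 0\<close> by simp
  have "xss ((1 / c) *\<^sub>R y) \<le> T / c"
  proof (rule biconj_le_0_imp_le[OF biconj])
    fix x
    show "ereal (((1 / c) *\<^sub>R y) x) - f x \<le> ereal (T / c)"
    proof (cases "f x = \<infinity>")
      case False
      then obtain v where v: "f x = ereal v" using proper by (cases "f x") (auto simp: proper_fun_def)
      have "(y x - c * v) / c \<le> T / c" using bound[of x] v \<open>c > 0\<close> by (simp add: divide_right_mono)
      then show ?thesis using v \<open>c > 0\<close> by (simp add: blinfun.scaleR_left diff_divide_distrib)
    qed simp
  qed
  then show ?thesis using \<open>c > 0\<close> by (simp add: blinfun.scaleR_right divide_le_cancel)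
qed

section \<open>Multipliers for convex inequalities\<close>

text \<open>Points \<open>(t\<^sub>0, \<dots>, t\<^sub>m)\<close> of \<open>\<real>\<^bsup>m+1\<^esup>\<close> are modelled as functions \<open>nat \<Rightarrow> real\<close>;
  the coordinates beyond \<open>m\<close> play no role.\<close>

instantiation "fun" :: (type, real_vector) real_vector
begin

definition scaleR_fun :: "real \<Rightarrow> ('a \<Rightarrow> 'b) \<Rightarrow> 'a \<Rightarrow> 'b" where
  "scaleR_fun c f = (\<lambda>x. c *\<^sub>R f x)"

instance by standard (auto simp: scaleR_fun_def fun_eq_iff algebra_simps)

end


lemma scaleR_fun_apply [simp]: "(c *\<^sub>R f) x = c *\<^sub>R f x"
  by (simp add: scaleR_fun_def)

lemma linear_eq_sum_unit_vectors:
  fixes L :: "(nat \<Rightarrow> real) \<Rightarrow> real"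
  assumes "linear L" and "\<And>j. j > m \<Longrightarrow> w j = 0"
  shows "L w = (\<Sum>i\<le>m. w i * L (\<lambda>j. if j = i then 1 else 0))"
proof -
  define e :: "nat \<Rightarrow> nat \<Rightarrow> real" where "e i = (\<lambda>j. if j = i then 1 else 0)" for i
  have "w = (\<Sum>i\<le>m. w i *\<^sub>R e i)"
  proof
    fix j
    have "(\<Sum>i\<le>m. w i *\<^sub>R e i) j = (\<Sum>i\<le>m. if i = j then w i else 0)"
      by (induction m) (auto simp: e_def)
    then show "w j = (\<Sum>i\<le>m. w i *\<^sub>R e i) j"
      using assms(2)[of j] by (auto simp: sum.delta')
  qed
  then have "L w = (\<Sum>i\<le>m. L (w i *\<^sub>R e i))"
    using linear_sum[OF assms(1)] by metis
  then show ?thesis by (simp add: linear_scale[OF assms(1)] e_def)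
qed

lemma convex_strict_upper_values:
  fixes G :: "nat \<Rightarrow> 'a::real_vector \<Rightarrow> real"
  assumes convex: "\<And>i. i \<le> m \<Longrightarrow> convex_on D (G i)"
  shows "convex {t. \<exists>x\<in>D. \<forall>i\<le>m. G i x < t i}"
  unfolding convex_alt
proof (intro ballI allI impI)
  fix p q :: "nat \<Rightarrow> real" and u :: real
  assume "p \<in> {t. \<exists>x\<in>D. \<forall>i\<le>m. G i x < t i}" "q \<in> {t. \<exists>x\<in>D. \<forall>i\<le>m. G i x < t i}"
    and u: "0 \<le> u \<and> u \<le> 1"
  then obtain x1 x2 where x: "x1 \<in> D" "x2 \<in> D" "\<And>i. i \<le> m \<Longrightarrow> G i x1 < p i" "\<And>i. i \<le> m \<Longrightarrow> G i x2 < q i"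
    by blast
  have "G i ((1 - u) *\<^sub>R x1 + u *\<^sub>R x2) < (1 - u) * p i + u * q i" if "i \<le> m" for i
  proof -
    have "G i ((1 - u) *\<^sub>R x1 + u *\<^sub>R x2) \<le> (1 - u) * G i x1 + u * G i x2"
      using convex_onD[OF convex[OF that]] u x(1,2) by auto
    also have "\<dots> < (1 - u) * p i + u * q i"
    proof (cases "u = 0")
      case False
      then show ?thesis using u x(3,4)[OF that]
        by (intro add_le_less_mono mult_left_mono mult_strict_left_mono) auto
    qed (use x(3)[OF that] in simp)
    finally show ?thesis .
  qed
  moreover have "(1 - u) *\<^sub>R x1 + u *\<^sub>R x2 \<in> D"
    using convexD_alt[OF convex_on_imp_convex[OF convex[of 0]] x(1,2)] u by auto
  ultimately show "(1 - u) *\<^sub>R p + u *\<^sub>R q \<in> {t. \<exists>x\<in>D. \<forall>i\<le>m. G i x < t i}" by auto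
qed

lemma multipliers_of_separating_functional:
  fixes G :: "nat \<Rightarrow> 'a \<Rightarrow> real" and L :: "(nat \<Rightarrow> real) \<Rightarrow> real"
  assumes L: "linear L" and "x0 \<in> D"
    and below: "\<And>t. \<exists>x\<in>D. \<forall>i\<le>m. G i x < t i \<Longrightarrow> L t \<le> L e"
    and e: "e = (\<lambda>i. if i \<le> m then \<epsilon> else 0)"
    and "L c < L e" and c: "\<And>i. i > m \<Longrightarrow> c i = 0"
  obtains \<mu> where "\<And>i. i \<le> m \<Longrightarrow> 0 \<le> \<mu> i" "0 < (\<Sum>i\<le>m. \<mu> i)"
    "\<And>x. x \<in> D \<Longrightarrow> \<epsilon> * (\<Sum>i\<le>m. \<mu> i) \<le> (\<Sum>i\<le>m. \<mu> i * G i x)"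
proof -
  define \<mu> where "\<mu> i = - L (\<lambda>j. if j = i then 1 else 0)" for i
  have L_eq: "L w = - (\<Sum>i\<le>m. \<mu> i * w i)" if "\<And>j. j > m \<Longrightarrow> w j = 0" for w
    using linear_eq_sum_unit_vectors[OF L that] by (simp add: \<mu>_def sum_negf algebra_simps)
  have \<mu>_nonneg: "0 \<le> \<mu> i" for i
  proof -
    have "s * L (\<lambda>j. if j = i then 1 else 0) \<le> L e - L (\<lambda>j. G j x0 + 1)" if "s > 0" for s
    proof -
      have "L ((\<lambda>j. G j x0 + 1) + s *\<^sub>R (\<lambda>j. if j = i then 1 else 0)) \<le> L e"
        using \<open>x0 \<in> D\<close> \<open>s > 0\<close> by (intro below bexI[of _ x0]) auto
      then show ?thesis by (simp add: linear_add[OF L] linear_scale[OF L])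
    qed
    then have "L (\<lambda>j. if j = i then 1 else 0) \<le> 0" by (rule nonpos_if_multiples_bounded)
    then show ?thesis unfolding \<mu>_def by simp
  qed
  have L_e: "L e = - (\<epsilon> * (\<Sum>i\<le>m. \<mu> i))"
    using L_eq[of e] by (simp add: e sum_distrib_left mult.commute)
  have "(\<Sum>i\<le>m. \<mu> i) \<ge> 0" using \<mu>_nonneg by (simp add: sum_nonneg)
  show ?thesis
  proof (rule that[OF \<mu>_nonneg])
    show "\<epsilon> * (\<Sum>i\<le>m. \<mu> i) \<le> (\<Sum>i\<le>m. \<mu> i * G i x)" if "x \<in> D" for x
    proof (rule field_le_epsilon)
      fix r :: real assume "r > 0"
      define \<eta> where "\<eta> = r / ((\<Sum>i\<le>m. \<mu> i) + 1)"
      have "\<eta> > 0" "\<eta> * (\<Sum>i\<le>m. \<mu> i) \<le> r"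
        using \<open>r > 0\<close> \<open>(\<Sum>i\<le>m. \<mu> i) \<ge> 0\<close> by (auto simp: \<eta>_def field_simps)
      have "L (\<lambda>i. if i \<le> m then G i x + \<eta> else 0) \<le> L e"
        using \<open>x \<in> D\<close> \<open>\<eta> > 0\<close> by (intro below bexI[of _ x]) auto
      then have "- (\<Sum>i\<le>m. \<mu> i * (G i x + \<eta>)) \<le> L e"
        using L_eq[of "\<lambda>i. if i \<le> m then G i x + \<eta> else 0"] by simp
      then show "\<epsilon> * (\<Sum>i\<le>m. \<mu> i) \<le> (\<Sum>i\<le>m. \<mu> i * G i x) + r"
        using L_e \<open>\<eta> * (\<Sum>i\<le>m. \<mu> i) \<le> r\<close>
        by (simp add: distrib_left sum.distrib sum_distrib_left mult.commute)
    qed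
    show "0 < (\<Sum>i\<le>m. \<mu> i)"
    proof (rule ccontr)
      assume "\<not> 0 < (\<Sum>i\<le>m. \<mu> i)"
      then have "\<forall>i\<in>{..m}. \<mu> i = 0"
        using \<mu>_nonneg sum_nonneg_eq_0_iff[of "{..m}" \<mu>] \<open>(\<Sum>i\<le>m. \<mu> i) \<ge> 0\<close> by auto
      then have "L c = L e" using L_eq[of c] L_eq[of e] c by (simp add: e)
      then show False using \<open>L c < L e\<close> by simp
    qed
  qed
qed

lemma convex_infeasibility_multipliers:
  fixes G :: "nat \<Rightarrow> 'a::real_vector \<Rightarrow> real"
  assumes "x0 \<in> D" and convex: "\<And>i. i \<le> m \<Longrightarrow> convex_on D (G i)"
    and infeasible: "\<not> (\<exists>x\<in>D. \<forall>i\<le>m. G i x < \<epsilon>)"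
  obtains \<mu> where "\<And>i. i \<le> m \<Longrightarrow> 0 \<le> \<mu> i" "0 < (\<Sum>i\<le>m. \<mu> i)"
    "\<And>x. x \<in> D \<Longrightarrow> \<epsilon> * (\<Sum>i\<le>m. \<mu> i) \<le> (\<Sum>i\<le>m. \<mu> i * G i x)"
proof -
  define A where "A = {t. \<exists>x\<in>D. \<forall>i\<le>m. G i x < t i}"
  define c where "c = (\<lambda>i. if i \<le> m then G i x0 + 1 else 0)"
  define e where "e = (\<lambda>i. if i \<le> m then \<epsilon> else 0)"
  have "convex A" unfolding A_def using convex by (rule convex_strict_upper_values)
  have "c \<in> A" unfolding A_def c_def using \<open>x0 \<in> D\<close> by (intro CollectI bexI[of _ x0]) auto
  have absorbing: "\<exists>t>0. c + t *\<^sub>R v \<in> A" for v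
  proof -
    define t where "t = 1 / ((\<Sum>i\<le>m. \<bar>v i\<bar>) + 1)"
    have "t > 0" unfolding t_def by (simp add: add_nonneg_pos sum_nonneg)
    have "\<bar>t * v i\<bar> < 1" if "i \<le> m" for i
    proof -
      have "\<bar>v i\<bar> \<le> (\<Sum>i\<le>m. \<bar>v i\<bar>)" using that by (intro member_le_sum) auto
      then show ?thesis unfolding t_def by (simp add: abs_mult divide_less_eq add_nonneg_pos sum_nonneg)
    qed
    then have "c + t *\<^sub>R v \<in> A" unfolding A_def c_def using \<open>x0 \<in> D\<close> by (force simp: abs_less_iff)
    then show ?thesis using \<open>t > 0\<close> by blast
  qed
  have "e \<notin> A"
  proof
    assume "e \<in> A"
    then obtain x where "x \<in> D" "\<And>i. i \<le> m \<Longrightarrow> G i x < e i" unfolding A_def by blast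
    then show False using infeasible unfolding e_def by force
  qed
  obtain L :: "(nat \<Rightarrow> real) \<Rightarrow> real" where L: "linear L" "\<And>t. t \<in> A \<Longrightarrow> L t \<le> L e" "L c < L e"
    using separating_linear_functional_at_point[OF \<open>convex A\<close> \<open>c \<in> A\<close> absorbing \<open>e \<notin> A\<close>] by blast
  have below: "L t \<le> L e" if "\<exists>x\<in>D. \<forall>i\<le>m. G i x < t i" for t
    using L(2)[of t] that unfolding A_def by simp
  have "\<And>i. i > m \<Longrightarrow> c i = 0" unfolding c_def by simp
  then obtain \<mu> where "\<And>i. i \<le> m \<Longrightarrow> 0 \<le> \<mu> i" "0 < (\<Sum>i\<le>m. \<mu> i)"
    "\<And>x. x \<in> D \<Longrightarrow> \<epsilon> * (\<Sum>i\<le>m. \<mu> i) \<le> (\<Sum>i\<le>m. \<mu> i * G i x)"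
    using multipliers_of_separating_functional[OF L(1) \<open>x0 \<in> D\<close> below e_def L(3)] by blast
  then show ?thesis by (rule that)
qed

section \<open>Dual certificates of infeasibility\<close>

lemma sum_atMost_split_0: "(\<Sum>i\<le>m. f i) = f 0 + (\<Sum>i=1..m. f i)"
  for f :: "nat \<Rightarrow> 'a::comm_monoid_add"
  by (simp add: atMost_atLeast0 sum.atLeast_Suc_atMost)

lemma infeasibility_certificate:
  fixes G :: "nat \<Rightarrow> 'a::real_normed_vector \<Rightarrow> real"
  assumes "x0 \<in> D" and convex_0: "convex_on D (G 0)"
    and convex: "\<And>i. i \<in> {1..m} \<Longrightarrow> convex_on UNIV (G i)"
    and continuous: "\<And>i. i \<in> {1..m} \<Longrightarrow> continuous_on UNIV (G i)"
    and infeasible: "\<not> (\<exists>x\<in>D. \<forall>i\<le>m. G i x < \<epsilon>)" and "\<epsilon> > 0"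
  obtains \<mu> :: "nat \<Rightarrow> real" and y :: "nat \<Rightarrow> 'a \<Rightarrow>\<^sub>L real" and T
  where "\<And>i. i \<le> m \<Longrightarrow> 0 \<le> \<mu> i" "(\<Sum>i\<le>m. y i) = (0 :: 'a \<Rightarrow>\<^sub>L real)"
    "\<And>x. x \<in> D \<Longrightarrow> y 0 x - \<mu> 0 * G 0 x \<le> T 0"
    "\<And>i z. i \<in> {1..m} \<Longrightarrow> y i z - \<mu> i * G i z \<le> T i"
    "(\<Sum>i\<le>m. T i) < 0"
proof -
  have "convex_on D (G i)" if "i \<le> m" for i
  proof (cases "i = 0")
    case False
    then show ?thesis
      using convex[of i] that convex_on_subset[OF _ subset_UNIV convex_on_imp_convex[OF convex_0]] by simp
  qed (use convex_0 in simp)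
  then obtain \<mu> where \<mu>: "\<And>i. i \<le> m \<Longrightarrow> 0 \<le> \<mu> i" "0 < (\<Sum>i\<le>m. \<mu> i)"
    "\<And>x. x \<in> D \<Longrightarrow> \<epsilon> * (\<Sum>i\<le>m. \<mu> i) \<le> (\<Sum>i\<le>m. \<mu> i * G i x)"
    using convex_infeasibility_multipliers[OF \<open>x0 \<in> D\<close> _ infeasible] by blast
  have "\<exists>(y :: nat \<Rightarrow> 'a \<Rightarrow>\<^sub>L real) T. y 0 + (\<Sum>i=1..m. y i) = (0 :: 'a \<Rightarrow>\<^sub>L real)
      \<and> (\<forall>x\<in>D. y 0 x - \<mu> 0 * G 0 x \<le> T 0) \<and> (\<forall>i\<in>{1..m}. \<forall>z. y i z - \<mu> i * G i z \<le> T i)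
      \<and> T 0 + (\<Sum>i=1..m. T i) \<le> - (\<epsilon> * (\<Sum>i\<le>m. \<mu> i))"
  proof (rule fenchel_sum_rule_finite[OF \<open>x0 \<in> D\<close>])
    show "convex_on D (\<lambda>x. \<mu> 0 * G 0 x)" using convex_on_cmul[OF \<mu>(1) convex_0] by simp
    show "convex_on UNIV (\<lambda>x. \<mu> i * G i x)" "continuous_on UNIV (\<lambda>x. \<mu> i * G i x)"
      if "i \<in> {1..m}" for i
      using that convex_on_cmul[OF \<mu>(1) convex[OF that]] continuous_on_mult[OF continuous_on_const continuous[OF that]]
      by auto
    show "\<epsilon> * (\<Sum>i\<le>m. \<mu> i) \<le> \<mu> 0 * G 0 x + (\<Sum>i=1..m. \<mu> i * G i x)" if "x \<in> D" for x
      using \<mu>(3)[OF that] by (simp add: sum_atMost_split_0)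
  qed
  then obtain y :: "nat \<Rightarrow> 'a \<Rightarrow>\<^sub>L real" and T where y: "y 0 + (\<Sum>i=1..m. y i) = (0 :: 'a \<Rightarrow>\<^sub>L real)"
      "\<And>x. x \<in> D \<Longrightarrow> y 0 x - \<mu> 0 * G 0 x \<le> T 0" "\<And>i z. i \<in> {1..m} \<Longrightarrow> y i z - \<mu> i * G i z \<le> T i"
      "T 0 + (\<Sum>i=1..m. T i) \<le> - (\<epsilon> * (\<Sum>i\<le>m. \<mu> i))"
    by blast
  show ?thesis
  proof (rule that[of \<mu> y T, OF \<mu>(1) _ y(2,3)])
    show "(\<Sum>i\<le>m. y i) = 0" using y(1) by (simp add: sum_atMost_split_0)
    have "0 < \<epsilon> * (\<Sum>i\<le>m. \<mu> i)" using \<open>\<epsilon> > 0\<close> \<mu>(2) by simp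
    then show "(\<Sum>i\<le>m. T i) < 0" using y(4) by (simp add: sum_atMost_split_0)
  qed
qed

lemma dual_certificate:
  fixes f0 :: "'a::real_normed_vector \<Rightarrow> ereal" and f :: "nat \<Rightarrow> 'a \<Rightarrow> real"
  assumes proper: "proper_fun f0" and "convex_ext f0"
    and convex: "\<And>i. i \<in> {1..m} \<Longrightarrow> convex_on UNIV (f i)"
    and continuous: "\<And>i. i \<in> {1..m} \<Longrightarrow> continuous_on UNIV (f i)"
    and "\<epsilon> > 0" and infeasible: "\<not> (\<exists>x. f0 x < ereal \<epsilon> \<and> (\<forall>i\<in>{1..m}. f i x < \<epsilon>))"
  obtains \<mu> :: "nat \<Rightarrow> real" and y :: "nat \<Rightarrow> 'a \<Rightarrow>\<^sub>L real" and T
  where "\<And>i. i \<le> m \<Longrightarrow> 0 \<le> \<mu> i" "(\<Sum>i\<le>m. y i) = (0 :: 'a \<Rightarrow>\<^sub>L real)"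
    "\<And>x. f0 x \<noteq> \<infinity> \<Longrightarrow> y 0 x - \<mu> 0 * real_of_ereal (f0 x) \<le> T 0"
    "\<And>i z. i \<in> {1..m} \<Longrightarrow> y i z - \<mu> i * f i z \<le> T i"
    "(\<Sum>i\<le>m. T i) < 0"
proof -
  define G where "G i = (if i = 0 then (\<lambda>x. real_of_ereal (f0 x)) else f i)" for i
  define D where "D = {x. f0 x \<noteq> \<infinity>}"
  obtain x0 where "x0 \<in> D" using proper unfolding proper_fun_def D_def by blast
  have "convex_on D (G 0)" using convex_on_real_of_ereal[OF assms(1,2)] by (simp add: G_def D_def)
  moreover have "\<not> (\<exists>x\<in>D. \<forall>i\<le>m. G i x < \<epsilon>)"
  proof
    assume "\<exists>x\<in>D. \<forall>i\<le>m. G i x < \<epsilon>"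
    then obtain x where "f0 x \<noteq> \<infinity>" and x: "\<And>i. i \<le> m \<Longrightarrow> G i x < \<epsilon>" unfolding D_def by blast
    moreover have "f0 x \<noteq> - \<infinity>" using proper unfolding proper_fun_def by blast
    ultimately have "f0 x < ereal \<epsilon>" using x[of 0] by (cases "f0 x") (auto simp: G_def)
    moreover have "f i x < \<epsilon>" if "i \<in> {1..m}" for i using x[of i] that by (simp add: G_def)
    ultimately show False using infeasible by blast
  qed
  moreover have "convex_on UNIV (G i)" "continuous_on UNIV (G i)" if "i \<in> {1..m}" for i
    using convex[OF that] continuous[OF that] that by (simp_all add: G_def)
  ultimately obtain \<mu> and y :: "nat \<Rightarrow> 'a \<Rightarrow>\<^sub>L real" and T
    where "\<And>i. i \<le> m \<Longrightarrow> 0 \<le> \<mu> i" "(\<Sum>i\<le>m. y i) = (0 :: 'a \<Rightarrow>\<^sub>L real)"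
      "\<And>x. x \<in> D \<Longrightarrow> y 0 x - \<mu> 0 * G 0 x \<le> T 0" "\<And>i z. i \<in> {1..m} \<Longrightarrow> y i z - \<mu> i * G i z \<le> T i"
      "(\<Sum>i\<le>m. T i) < 0"
    using infeasibility_certificate[OF \<open>x0 \<in> D\<close>, of G m \<epsilon>] \<open>\<epsilon> > 0\<close> by blast
  then show ?thesis using that[of \<mu> y T] by (simp add: G_def D_def)
qed

theorem lemma7p1:
  fixes f0 :: "'a::banach \<Rightarrow> ereal"
    and f :: "nat \<Rightarrow> 'a \<Rightarrow> real"
    and m :: nat
  assumes "\<exists>x::'a. x \<noteq> 0"
    and "m \<ge> 1"
    and "proper_fun f0" and "convex_ext f0" and "lsc_ext f0"
    and "\<And>i. i \<in> {1..m} \<Longrightarrow> convex_on UNIV (f i)"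
    and "\<And>i. i \<in> {1..m} \<Longrightarrow> continuous_on UNIV (f i)"
    and "\<exists>xss. biconj f0 xss \<le> 0 \<and> (\<forall>i\<in>{1..m}. biconj (\<lambda>x. ereal (f i x)) xss \<le> 0)"
  shows "\<forall>\<epsilon>>0. \<exists>x. f0 x \<le> ereal \<epsilon> \<and> (\<forall>i\<in>{1..m}. f i x \<le> \<epsilon>)"
proof (intro allI impI, rule ccontr)
  fix \<epsilon> :: real
  assume "\<epsilon> > 0" and "\<not> (\<exists>x. f0 x \<le> ereal \<epsilon> \<and> (\<forall>i\<in>{1..m}. f i x \<le> \<epsilon>))"
  then have "\<not> (\<exists>x. f0 x < ereal \<epsilon> \<and> (\<forall>i\<in>{1..m}. f i x < \<epsilon>))" by (meson less_imp_le)
  then obtain \<mu> and y :: "nat \<Rightarrow> 'a \<Rightarrow>\<^sub>L real" and T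
    where cert: "\<And>i. i \<le> m \<Longrightarrow> 0 \<le> \<mu> i" "(\<Sum>i\<le>m. y i) = (0 :: 'a \<Rightarrow>\<^sub>L real)"
      "\<And>x. f0 x \<noteq> \<infinity> \<Longrightarrow> y 0 x - \<mu> 0 * real_of_ereal (f0 x) \<le> T 0"
      "\<And>i z. i \<in> {1..m} \<Longrightarrow> y i z - \<mu> i * f i z \<le> T i" "(\<Sum>i\<le>m. T i) < 0"
    using dual_certificate[where m = m and f = f, OF assms(3,4,6,7) \<open>\<epsilon> > 0\<close>] by blast
  obtain xss where xss: "biconj f0 xss \<le> 0" "\<And>i. i \<in> {1..m} \<Longrightarrow> biconj (\<lambda>x. ereal (f i x)) xss \<le> 0"
    using assms(8) by blast
  have "xss (y i) \<le> T i" if "i \<le> m" for i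
  proof (cases "i = 0")
    case True
    then show ?thesis using biconj_le_0_imp_scaled_le[OF assms(3-5) xss(1) cert(1)[of 0] cert(3)] by simp
  next
    case False
    then have i: "i \<in> {1..m}" using that by simp
    show ?thesis
      using biconj_le_0_imp_scaled_le[OF proper_convex_lsc_ereal[OF assms(6,7)[OF i]] xss(2)[OF i]
          cert(1)[OF that]] cert(4)[OF i] by simp
  qed
  then have "xss (\<Sum>i\<le>m. y i) \<le> (\<Sum>i\<le>m. T i)" unfolding blinfun.sum_right by (intro sum_mono) simp
  then show False using cert(2,5) by simp
qed

end
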